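(* Let $(X,d)$ be a complete metric space with (metric) uniform normal structure and property (P) for nets. Let $\mathcal S$ be a semigroup whose preorder $\le$ is total, and suppose the action $(\mathcal S,X)$ is strong-orbit $k$-Lipschitzian with $k<\tilde N(X)^{-1/2}$. If some orbit is bounded, then there is $z\in X$ such that $sz=z$ for all $s\in\mathcal S$.
   Context: A semigroup action is a map $\mathcal S\times X\to X$, $(s,x)\mapsto sx$, with $(st)x=s(tx)$. $\mathcal S^1$ is $\mathcal S$ with an identity adjoined. The preorder on $\mathcal S$: $s\le t$ iff $t\in\mathcal S^1s=\{s\}\cup\mathcal S s$; it is total if for all $s,t$, $s\le t$ or $t\le s$. The orbit of $x$ is $o(x)=\{x\}\cup\{sx:s\in\mathcal S\}$; $D(x,C)=\sup\{d(x,y):y\in C\}$. The action is strong-orbit $k$-Lipschitzian if $D(sx,o(sy))\le k\,D(x,o(y))$ for all $s\in\mathcal S$, $x,y\in X$. A set is admissible if it is a nonempty intersection of closed balls; ${\rm cov}(C)$ is the intersection of all closed balls containing $C$. $r(A)=\inf_{x\in A}D(x,A)$, $\delta(A)=\sup\{d(x,y):x,y\in A\}$; $\tilde N(X)=\sup\{r(A)/\delta(A)\}$ over admissible $A$ with $\delta(A)>0$, and $X$ has (metric) uniform normal structure if $\tilde N(X)<1$. Property (P) for nets: for any directed preordered index set and any two bounded nets $\{x_s\}$, $\{z_s\}$ in $X$ with $z_s\in{\rm cov}(\{x_j:j\ge s\})$, there is $z\in\bigcap_s{\rm cov}(\{z_j:j\ge s\})$ with $\limsup_s d(z,x_s)\le\limsup_t\limsup_s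 d(z_t,x_s)$. *)

theory Defs
  imports "HOL-Analysis.Analysis"
begin

definition is_action :: "('b::semigroup_mult \<Rightarrow> 'a \<Rightarrow> 'a) \<Rightarrow> bool" where
  "is_action act \<longleftrightarrow> (\<forall>s t x. act (s * t) x = act s (act t x))"

definition sg_le :: "'b::semigroup_mult \<Rightarrow> 'b \<Rightarrow> bool" where
  "sg_le s t \<longleftrightarrow> t = s \<or> (\<exists>u. t = u * s)"

definition sg_le_total :: "'b::semigroup_mult itself \<Rightarrow> bool" where
  "sg_le_total _ \<longleftrightarrow> (\<forall>s t::'b. sg_le s t \<or> sg_le t s)"

definition orbit :: "('b \<Rightarrow> 'a \<Rightarrow> 'a) \<Rightarrow> 'a \<Rightarrow> 'a set" where
  "orbit act x = insert x (range (\<lambda>s. act s x))"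

definition Dsup :: "'a::metric_space \<Rightarrow> 'a set \<Rightarrow> ereal" where
  "Dsup x C = (SUP y\<in>C. ereal (dist x y))"

definition strong_orbit_lipschitz ::
  "('b \<Rightarrow> 'a::metric_space \<Rightarrow> 'a) \<Rightarrow> real \<Rightarrow> bool" where
  "strong_orbit_lipschitz act k \<longleftrightarrow>
     (\<forall>s x y. Dsup (act s x) (orbit act (act s y)) \<le> ereal k * Dsup x (orbit act y))"

definition admissible :: "'a::metric_space set \<Rightarrow> bool" where
  "admissible A \<longleftrightarrow> A \<noteq> {} \<and>
     (\<exists>F. F \<noteq> {} \<and> (\<forall>B\<in>F. \<exists>x r. B = cball x r) \<and> A = \<Inter>F)"

definition cov :: "'a::metric_space set \<Rightarrow> 'a set" where
  "cov C = \<Inter>{cball x r | x r. C \<subseteq> cball x r}"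

definition cheb_radius :: "'a::metric_space set \<Rightarrow> ereal" where
  "cheb_radius A = (INF x\<in>A. Dsup x A)"

definition diam_e :: "'a::metric_space set \<Rightarrow> ereal" where
  "diam_e A = (SUP x\<in>A. SUP y\<in>A. ereal (dist x y))"

definition Ntilde_set :: "'a::metric_space itself \<Rightarrow> real set" where
  "Ntilde_set _ = {real_of_ereal (cheb_radius A) / real_of_ereal (diam_e A) | A::'a set.
                     admissible A \<and> diam_e A > 0}"

definition Ntilde :: "'a::metric_space itself \<Rightarrow> real" where
  "Ntilde T = (if Ntilde_set T = {} then 0 else Sup (Ntilde_set T))"

definition uniform_normal_structure :: "'a::metric_space itself \<Rightarrow> bool" where
  "uniform_normal_structure T \<longleftrightarrow> Ntilde T < 1"

definition directed_preorder_on :: "'i set \<Rightarrow> ('i \<Rightarrow> 'i \<Rightarrow> bool) \<Rightarrow> bool" where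
  "directed_preorder_on I le \<longleftrightarrow> I \<noteq> {} \<and>
     (\<forall>i\<in>I. le i i) \<and>
     (\<forall>i\<in>I. \<forall>j\<in>I. \<forall>k\<in>I. le i j \<longrightarrow> le j k \<longrightarrow> le i k) \<and>
     (\<forall>i\<in>I. \<forall>j\<in>I. \<exists>k\<in>I. le i k \<and> le j k)"

definition tail :: "'i set \<Rightarrow> ('i \<Rightarrow> 'i \<Rightarrow> bool) \<Rightarrow> 'i \<Rightarrow> 'i set" where
  "tail I le s = {j\<in>I. le s j}"

definition net_limsup :: "'i set \<Rightarrow> ('i \<Rightarrow> 'i \<Rightarrow> bool) \<Rightarrow> ('i \<Rightarrow> real) \<Rightarrow> ereal" where
  "net_limsup I le f = (INF s\<in>I. SUP j\<in>tail I le s. ereal (f j))"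

definition property_P :: "'i itself \<Rightarrow> 'a::metric_space itself \<Rightarrow> bool" where
  "property_P _ _ \<longleftrightarrow>
    (\<forall>(I::'i set) le (x::'i \<Rightarrow> 'a) (z::'i \<Rightarrow> 'a).
       directed_preorder_on I le \<and> bounded (x ` I) \<and> bounded (z ` I) \<and>
       (\<forall>s\<in>I. z s \<in> cov (x ` tail I le s)) \<longrightarrow>
       (\<exists>w. (\<forall>s\<in>I. w \<in> cov (z ` tail I le s)) \<and>
            net_limsup I le (\<lambda>s. dist w (x s))
              \<le> net_limsup I le (\<lambda>t. real_of_ereal (net_limsup I le (\<lambda>s. dist (z t) (x s))))))"

end

theory Submission
  imports Defs
begin

text \<open>
  Let the orbit of \<open>x\<close> lie in \<open>cball x D\<close>. Since the preorder is total, any two points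
  \<open>act i x\<close>, \<open>act j x\<close> are comparable, so the Lipschitz condition puts them within \<open>k * D\<close>
  of each other. For \<open>N > Ntilde\<close>, the definition of \<open>Ntilde\<close> then yields for every \<open>t\<close> a
  centre of \<open>cov (orbit act (act t x))\<close> of radius \<open>N * k * D\<close>, and property (P) merges
  these centres into one point \<open>w\<close> that lies in every \<open>cov (orbit act (act t x))\<close> and is
  asymptotically within \<open>N * k * D\<close> of the net \<open>act t x\<close>. The Lipschitz condition then
  confines the orbit of \<open>w\<close> to \<open>cball w (k * N * k * D)\<close>, while
  \<open>dist x w \<le> (1 + N * k) * D\<close>. As \<open>N * k\<^sup>2 < 1\<close>, iterating this step shrinks orbit radii
  geometrically; the points form a Cauchy sequence whose limit is a common fixed point.
\<close>

section \<open>Sequences with summable steps\<close>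

lemma dist_le_sum_dist_Suc:
  fixes z :: "nat \<Rightarrow> 'a::metric_space"
  assumes "m \<le> n"
  shows "dist (z m) (z n) \<le> (\<Sum>i=m..<n. dist (z i) (z (Suc i)))"
  using assms
proof (induction n rule: dec_induct)
  case base
  then show ?case by simp
next
  case (step n)
  then show ?case
    using dist_triangle[of "z m" "z (Suc n)" "z n"] by simp
qed

lemma Cauchy_if_summable_dist_Suc:
  fixes z :: "nat \<Rightarrow> 'a::metric_space"
  assumes "summable a" and dist_le: "\<And>n. dist (z n) (z (Suc n)) \<le> a n"
  shows "Cauchy z"
proof (rule metric_CauchyI)
  fix e :: real
  assume "0 < e"
  then obtain N where N: "\<And>m n. N \<le> m \<Longrightarrow> norm (sum a {m..<n}) < e"
    using \<open>summable a\<close> unfolding summable_Cauchy by blast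
  have "dist (z m) (z n) < e" if "N \<le> m" "m \<le> n" for m n
  proof -
    have "dist (z m) (z n) \<le> (\<Sum>i=m..<n. dist (z i) (z (Suc i)))"
      using \<open>m \<le> n\<close> by (rule dist_le_sum_dist_Suc)
    also have "\<dots> \<le> sum a {m..<n}"
      by (rule sum_mono) (rule dist_le)
    also have "\<dots> < e"
      using N[OF \<open>N \<le> m\<close>, of n] by simp
    finally show ?thesis .
  qed
  then show "\<exists>M. \<forall>m\<ge>M. \<forall>n\<ge>M. dist (z m) (z n) < e"
    by (metis dist_commute nle_le)
qed

lemma geometric_refinement_converges:
  fixes R :: "'a::complete_space \<Rightarrow> real \<Rightarrow> bool"
  assumes refine: "\<And>x D. R x D \<Longrightarrow> \<exists>y. R y (c * D) \<and> dist x y \<le> B * D"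
    and "0 \<le> c" "c < 1" and "R x\<^sub>0 D\<^sub>0"
  obtains x z where "x \<longlonglongrightarrow> z" and "\<And>n. R (x n) (c ^ n * D\<^sub>0)"
proof -
  have "\<exists>y. R y (c ^ Suc n * D\<^sub>0) \<and> dist x y \<le> B * (c ^ n * D\<^sub>0)"
    if "R x (c ^ n * D\<^sub>0)" for x n
    using refine[OF that] by (simp add: mult.assoc)
  then obtain x where x: "\<And>n. R (x n) (c ^ n * D\<^sub>0)"
    and dist_Suc: "\<And>n. dist (x n) (x (Suc n)) \<le> B * (c ^ n * D\<^sub>0)"
    using dependent_nat_choice[of "\<lambda>n y. R y (c ^ n * D\<^sub>0)"
        "\<lambda>n y y'. dist y y' \<le> B * (c ^ n * D\<^sub>0)"] \<open>R x\<^sub>0 D\<^sub>0\<close>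
    by force
  have "summable (\<lambda>n. B * D\<^sub>0 * c ^ n)"
    using \<open>0 \<le> c\<close> \<open>c < 1\<close> by (intro summable_mult summable_geometric) simp
  then have "Cauchy x"
    by (rule Cauchy_if_summable_dist_Suc) (use dist_Suc in \<open>simp add: mult_ac\<close>)
  then obtain z where "x \<longlonglongrightarrow> z"
    using Cauchy_convergent convergent_def by blast
  then show thesis using that x by blast
qed

section \<open>Chebyshev centres of admissible hulls\<close>

lemma subset_cov: "C \<subseteq> cov C"
  unfolding cov_def by blast

lemma cov_subset_cball: "C \<subseteq> cball a r \<Longrightarrow> cov C \<subseteq> cball a r"
  unfolding cov_def by blast

lemma cov_subset_cov: "C \<subseteq> cov C' \<Longrightarrow> cov C \<subseteq> cov C'"
  unfolding cov_def by blast

lemma cov_mono: "C \<subseteq> C' \<Longrightarrow> cov C \<subseteq> cov C'"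
  unfolding cov_def by blast

lemma dist_le_in_cov:
  assumes "\<forall>a\<in>C. \<forall>b\<in>C. dist a b \<le> \<delta>" and "a \<in> cov C" and "b \<in> cov C"
  shows "dist a b \<le> \<delta>"
proof -
  have "C \<subseteq> cball a \<delta>"
  proof
    fix c
    assume "c \<in> C"
    with assms(1) have "C \<subseteq> cball c \<delta>"
      by auto
    then have "a \<in> cball c \<delta>"
      using cov_subset_cball \<open>a \<in> cov C\<close> by blast
    then show "c \<in> cball a \<delta>"
      by (simp add: dist_commute)
  qed
  then have "b \<in> cball a \<delta>"
    using cov_subset_cball \<open>b \<in> cov C\<close> by blast
  then show ?thesis
    by simp
qed

lemma admissible_cov:
  assumes "C \<noteq> {}" and "bounded C"
  shows "admissible (cov C)"
proof -
  define F where "F = {cball x r | x r. C \<subseteq> cball x r}"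
  obtain a r where "C \<subseteq> cball a r"
    using \<open>bounded C\<close> bounded_subset_cball by blast
  then have "F \<noteq> {}"
    unfolding F_def by blast
  moreover have "cov C \<noteq> {}"
    using \<open>C \<noteq> {}\<close> subset_cov by blast
  moreover have "cov C = \<Inter>F" "\<forall>B\<in>F. \<exists>x r. B = cball x r"
    unfolding F_def cov_def by blast+
  ultimately show ?thesis
    unfolding admissible_def by blast
qed

lemma Dsup_le_ereal_iff: "Dsup x C \<le> ereal M \<longleftrightarrow> C \<subseteq> cball x M"
  by (auto simp: Dsup_def SUP_le_iff)

lemma Dsup_nonneg: "y \<in> C \<Longrightarrow> 0 \<le> Dsup x C"
  unfolding Dsup_def by (rule SUP_upper2) (auto simp: zero_ereal_def)

lemma Dsup_le_diam_e: "x \<in> A \<Longrightarrow> Dsup x A \<le> diam_e A"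
  unfolding Dsup_def diam_e_def by (rule SUP_upper)

lemma cheb_radius_nonneg: "0 \<le> cheb_radius A"
  unfolding cheb_radius_def using Dsup_nonneg by (blast intro: INF_greatest)

lemma cheb_radius_le_diam_e: "A \<noteq> {} \<Longrightarrow> cheb_radius A \<le> diam_e A"
  unfolding cheb_radius_def using Dsup_le_diam_e by (blast intro: INF_lower2)

lemma bdd_above_Ntilde_set: "bdd_above (Ntilde_set TYPE('a::metric_space))"
proof (rule bdd_aboveI)
  fix q
  assume "q \<in> Ntilde_set TYPE('a)"
  then obtain A :: "'a set"
    where q: "q = real_of_ereal (cheb_radius A) / real_of_ereal (diam_e A)"
      and "admissible A"
    unfolding Ntilde_set_def by blast
  then have "0 \<le> cheb_radius A" "cheb_radius A \<le> diam_e A"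
    using cheb_radius_nonneg cheb_radius_le_diam_e unfolding admissible_def by auto
  then show "q \<le> 1"
    unfolding q by (cases "cheb_radius A"; cases "diam_e A") (auto simp: divide_le_eq_1)
qed

lemma cheb_radius_le_Ntilde:
  fixes A :: "'a::metric_space set"
  assumes "admissible A" and "diam_e A = ereal d" and "0 < d"
  shows "cheb_radius A \<le> ereal (Ntilde TYPE('a) * d)"
proof -
  obtain r where r: "cheb_radius A = ereal r"
    using cheb_radius_nonneg[of A] cheb_radius_le_diam_e[of A] assms
    unfolding admissible_def by (cases "cheb_radius A") auto
  have "r / d \<in> Ntilde_set TYPE('a)"
    unfolding Ntilde_set_def using assms r by force
  then have "r / d \<le> Ntilde TYPE('a)"
    unfolding Ntilde_def using cSup_upper[OF _ bdd_above_Ntilde_set] by auto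
  with \<open>0 < d\<close> r show ?thesis
    by (simp add: divide_le_eq)
qed

lemma exists_centre_of_cov:
  fixes C :: "'a::metric_space set"
  assumes "C \<noteq> {}" and "bounded C" and diam: "\<forall>a\<in>C. \<forall>b\<in>C. dist a b \<le> \<delta>"
    and "Ntilde TYPE('a) < N" and "0 < N"
  shows "\<exists>z\<in>cov C. cov C \<subseteq> cball z (N * \<delta>)"
proof -
  define A where "A = cov C"
  obtain c where "c \<in> A"
    using \<open>C \<noteq> {}\<close> subset_cov unfolding A_def by blast
  have diam_A: "diam_e A \<le> ereal \<delta>"
    unfolding diam_e_def A_def using dist_le_in_cov[OF diam] by (auto intro!: SUP_least)
  have "0 \<le> \<delta>"
    using diam \<open>C \<noteq> {}\<close> by force
  have "\<exists>z\<in>A. Dsup z A \<le> ereal (N * \<delta>)"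
  proof (cases "diam_e A > 0")
    case True
    then obtain d where d: "diam_e A = ereal d" "0 < d" "d \<le> \<delta>"
      using diam_A by (cases "diam_e A") auto
    have "cheb_radius A \<le> ereal (Ntilde TYPE('a) * d)"
      using admissible_cov[OF \<open>C \<noteq> {}\<close> \<open>bounded C\<close>] d unfolding A_def
      by (intro cheb_radius_le_Ntilde) auto
    also have "\<dots> < ereal (N * d)"
      using d \<open>Ntilde TYPE('a) < N\<close> by simp
    \<comment> \<open>\<open>N > Ntilde\<close> is needed because the infimum \<open>cheb_radius A\<close> need not be attained.\<close>
    finally obtain z where "z \<in> A" "Dsup z A < ereal (N * d)"
      unfolding cheb_radius_def by (auto simp: INF_less_iff)
    moreover have "ereal (N * d) \<le> ereal (N * \<delta>)"
      using d \<open>0 < N\<close> by simp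
    ultimately show ?thesis
      using less_imp_le order_trans by blast
  next
    case False
    then have "Dsup c A \<le> 0"
      using Dsup_le_diam_e[OF \<open>c \<in> A\<close>] by simp
    also have "0 \<le> ereal (N * \<delta>)"
      using \<open>0 < N\<close> \<open>0 \<le> \<delta>\<close> by simp
    finally have "Dsup c A \<le> ereal (N * \<delta>)" .
    with \<open>c \<in> A\<close> show ?thesis by blast
  qed
  then show ?thesis
    unfolding A_def Dsup_le_ereal_iff by blast
qed

section \<open>Orbits along the semigroup preorder\<close>

lemma act_mult: "is_action act \<Longrightarrow> act (s * t) x = act s (act t x)"
  unfolding is_action_def by blast

lemma self_in_orbit [simp]: "x \<in> orbit act x"
  unfolding orbit_def by blast

lemma act_in_orbit [simp]: "act s x \<in> orbit act x"
  unfolding orbit_def by blast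

lemma orbit_act_subset: "is_action act \<Longrightarrow> orbit act (act t x) \<subseteq> orbit act x"
  unfolding orbit_def by (auto simp flip: act_mult)

lemma sg_le_refl [simp]: "sg_le s s"
  unfolding sg_le_def by simp

lemma sg_le_mult [simp]: "sg_le s (u * s)"
  unfolding sg_le_def by blast

lemma sg_le_trans: "sg_le s t \<Longrightarrow> sg_le t u \<Longrightarrow> sg_le s u"
  unfolding sg_le_def by (metis mult.assoc)

lemma directed_preorder_on_sg_le:
  "sg_le_total TYPE('b::semigroup_mult) \<Longrightarrow> directed_preorder_on (UNIV :: 'b set) sg_le"
  unfolding directed_preorder_on_def sg_le_total_def
  using sg_le_refl sg_le_trans by blast

lemma image_tail_sg_le_eq_orbit:
  assumes "is_action act"
  shows "(\<lambda>j. act j x) ` tail UNIV sg_le t = orbit act (act t x)"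
proof
  show "(\<lambda>j. act j x) ` tail UNIV sg_le t \<subseteq> orbit act (act t x)"
    unfolding tail_def sg_le_def orbit_def by (auto simp: act_mult[OF assms])
  show "orbit act (act t x) \<subseteq> (\<lambda>j. act j x) ` tail UNIV sg_le t"
  proof
    fix p
    assume "p \<in> orbit act (act t x)"
    then consider "p = act t x" | u where "p = act (u * t) x"
      unfolding orbit_def by (auto simp: act_mult[OF assms])
    then show "p \<in> (\<lambda>j. act j x) ` tail UNIV sg_le t"
      by cases (auto simp: tail_def)
  qed
qed

lemma strong_orbit_lipschitz_mono:
  assumes "strong_orbit_lipschitz act k" and "k \<le> k'"
  shows "strong_orbit_lipschitz act k'"
  unfolding strong_orbit_lipschitz_def
proof (intro allI)
  fix s x y
  have "Dsup (act s x) (orbit act (act s y)) \<le> ereal k * Dsup x (orbit act y)"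
    using assms(1) unfolding strong_orbit_lipschitz_def by blast
  also have "\<dots> \<le> ereal k' * Dsup x (orbit act y)"
    using \<open>k \<le> k'\<close> Dsup_nonneg[OF self_in_orbit] by (intro ereal_mult_right_mono) auto
  finally show "Dsup (act s x) (orbit act (act s y)) \<le> ereal k' * Dsup x (orbit act y)" .
qed

lemma strong_orbit_lipschitz_cball:
  assumes "strong_orbit_lipschitz act k" and "0 \<le> k" and "orbit act y \<subseteq> cball x M"
  shows "orbit act (act s y) \<subseteq> cball (act s x) (k * M)"
proof -
  have "Dsup (act s x) (orbit act (act s y)) \<le> ereal k * Dsup x (orbit act y)"
    using assms(1) unfolding strong_orbit_lipschitz_def by blast
  also have "\<dots> \<le> ereal k * ereal M"
    using assms(2,3) by (intro ereal_mult_left_mono) (auto simp: Dsup_le_ereal_iff)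
  finally show ?thesis
    by (simp add: Dsup_le_ereal_iff)
qed

lemma dist_act_le_if_orbit_in_cball:
  assumes "is_action act" and "sg_le_total TYPE('b::semigroup_mult)"
    and "strong_orbit_lipschitz act k" and "0 \<le> k" and "orbit act x \<subseteq> cball x D"
  shows "dist (act (i::'b) x) (act j x) \<le> k * D"
proof -
  have "dist (act i x) (act j x) \<le> k * D" if "sg_le i j" for i j
  proof -
    have "act j x \<in> orbit act (act i x)"
      using image_tail_sg_le_eq_orbit[OF assms(1)] that unfolding tail_def by blast
    then show ?thesis
      using strong_orbit_lipschitz_cball[OF assms(3-5), of i] by (meson mem_cball subsetD)
  qed
  then show ?thesis
    using assms(2) unfolding sg_le_total_def by (metis dist_commute)
qed

section \<open>Shrinking the orbit radius\<close>

lemma net_limsup_le: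
  assumes "s \<in> I" and "\<And>j. j \<in> tail I le s \<Longrightarrow> f j \<le> M"
  shows "net_limsup I le f \<le> ereal M"
  unfolding net_limsup_def using assms by (intro INF_lower2[OF \<open>s \<in> I\<close>] SUP_least) auto

lemma net_limsup_lessE:
  assumes "net_limsup I le f < ereal c"
  obtains s where "s \<in> I" and "\<And>j. j \<in> tail I le s \<Longrightarrow> f j < c"
proof -
  obtain s where "s \<in> I" and less: "(SUP j\<in>tail I le s. ereal (f j)) < ereal c"
    using assms unfolding net_limsup_def by (auto simp: INF_less_iff)
  show thesis
  proof (rule that[OF \<open>s \<in> I\<close>])
    fix j
    assume "j \<in> tail I le s"
    with less have "ereal (f j) < ereal c"
      by (rule SUP_lessD)
    then show "f j < c"
      by simp
  qed
qed

lemma property_P_orbit_centre: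
  fixes act :: "'b::semigroup_mult \<Rightarrow> 'a::metric_space \<Rightarrow> 'a"
  assumes act: "is_action act" and P: "property_P TYPE('b) TYPE('a)"
    and tot: "sg_le_total TYPE('b)" and D: "orbit act x \<subseteq> cball x D"
    and z_cov: "\<And>t. z t \<in> cov (orbit act (act t x))"
    and z_centre: "\<And>t. cov (orbit act (act t x)) \<subseteq> cball (z t) M" and "0 \<le> M"
  obtains w where "\<And>s. w \<in> cov (orbit act (act s x))"
    and "\<And>e. 0 < e \<Longrightarrow> \<exists>u. orbit act (act u x) \<subseteq> cball w (M + e)"
proof -
  define xs where "xs = (\<lambda>j. act j x)"
  have orbit_eq: "xs ` tail UNIV sg_le t = orbit act (act t x)" for t
    unfolding xs_def by (rule image_tail_sg_le_eq_orbit[OF act])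
  have orbit_in_cball: "orbit act (act t x) \<subseteq> cball x D" for t
    using orbit_act_subset[OF act] D by (rule order_trans)
  have "range xs \<subseteq> cball x D"
    unfolding xs_def using D by auto
  then have "bounded (range xs)"
    by (rule bounded_subset[OF bounded_cball])
  have "z t \<in> cball x D" for t
    using z_cov[of t] cov_subset_cball[OF orbit_in_cball] by blast
  then have "range z \<subseteq> cball x D"
    by blast
  then have "bounded (range z)"
    by (rule bounded_subset[OF bounded_cball])
  have "\<forall>s\<in>UNIV. z s \<in> cov (xs ` tail UNIV sg_le s)"
    using z_cov orbit_eq by simp
  with directed_preorder_on_sg_le[OF tot] \<open>bounded (range xs)\<close> \<open>bounded (range z)\<close>
  have "directed_preorder_on (UNIV :: 'b set) sg_le \<and> bounded (range xs) \<and> bounded (range z)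
      \<and> (\<forall>s\<in>UNIV. z s \<in> cov (xs ` tail UNIV sg_le s))"
    by blast
  from P[unfolded property_P_def, rule_format, OF this]
  obtain w where w_cov: "\<And>s. w \<in> cov (z ` tail UNIV sg_le s)"
    and w_limsup: "net_limsup UNIV sg_le (\<lambda>s. dist w (xs s)) \<le> net_limsup UNIV sg_le
        (\<lambda>t. real_of_ereal (net_limsup UNIV sg_le (\<lambda>s. dist (z t) (xs s))))"
    by blast
  show thesis
  proof
    fix s
    have "z ` tail UNIV sg_le s \<subseteq> cov (orbit act (act s x))"
    proof
      fix p
      assume "p \<in> z ` tail UNIV sg_le s"
      then obtain t where "sg_le s t" and "p = z t"
        unfolding tail_def by blast
      then have "orbit act (act t x) \<subseteq> orbit act (act s x)"
        unfolding orbit_eq[symmetric] tail_def by (auto intro: sg_le_trans)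
      then show "p \<in> cov (orbit act (act s x))"
        using z_cov[of t] cov_mono \<open>p = z t\<close> by blast
    qed
    then show "w \<in> cov (orbit act (act s x))"
      using w_cov cov_subset_cov by blast
  next
    fix e :: real
    assume "0 < e"
    have inner: "net_limsup UNIV sg_le (\<lambda>s. dist (z t) (xs s)) \<le> ereal M" for t
    proof (rule net_limsup_le)
      fix j
      assume "j \<in> tail UNIV sg_le t"
      then have "xs j \<in> cov (orbit act (act t x))"
        using orbit_eq[of t] subset_cov by blast
      then show "dist (z t) (xs j) \<le> M"
        using z_centre[of t] by (meson mem_cball subsetD)
    qed simp
    have "real_of_ereal (net_limsup UNIV sg_le (\<lambda>s. dist (z t) (xs s))) \<le> M" for t
      using inner[of t] \<open>0 \<le> M\<close> by (cases "net_limsup UNIV sg_le (\<lambda>s. dist (z t) (xs s))") auto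
    then have "net_limsup UNIV sg_le (\<lambda>s. dist w (xs s)) \<le> ereal M"
      using w_limsup by (meson UNIV_I net_limsup_le order_trans)
    also have "\<dots> < ereal (M + e)"
      using \<open>0 < e\<close> by simp
    finally obtain u where "\<And>j. j \<in> tail UNIV sg_le u \<Longrightarrow> dist w (xs j) < M + e"
      by (rule net_limsup_lessE) blast
    then have "orbit act (act u x) \<subseteq> cball w (M + e)"
      unfolding orbit_eq[symmetric] by (force intro: less_imp_le)
    then show "\<exists>u. orbit act (act u x) \<subseteq> cball w (M + e)" ..
  qed
qed

lemma orbit_in_cball_if_asymptotic_centre:
  assumes act: "is_action act" and lip: "strong_orbit_lipschitz act k" "0 \<le> k"
    and w_cov: "\<And>s. w \<in> cov (orbit act (act s x))"
    and near: "\<And>e. 0 < e \<Longrightarrow> \<exists>u. orbit act (act u x) \<subseteq> cball w (M + e)"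
    and "0 \<le> M"
  shows "orbit act w \<subseteq> cball w (k * M)"
proof -
  have approx: "dist w (act s w) \<le> k * (M + e)" if e: "0 < e" for s e
  proof -
    obtain u where "orbit act (act u x) \<subseteq> cball w (M + e)"
      using near[OF e] by blast
    then have "orbit act (act (s * u) x) \<subseteq> cball (act s w) (k * (M + e))"
      using strong_orbit_lipschitz_cball[OF lip] by (simp add: act_mult[OF act])
    then have "w \<in> cball (act s w) (k * (M + e))"
      using w_cov cov_subset_cball by blast
    then show ?thesis
      by (simp add: dist_commute)
  qed
  have "dist w (act s w) \<le> k * M" for s
  proof (rule field_le_epsilon)
    fix e :: real
    assume "0 < e"
    then have "dist w (act s w) \<le> k * (M + e / (k + 1))"
      using \<open>0 \<le> k\<close> by (intro approx) simp
    also have "\<dots> \<le> k * M + e"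
      using \<open>0 < e\<close> \<open>0 \<le> k\<close> by (simp add: distrib_left field_simps)
    finally show "dist w (act s w) \<le> k * M + e" .
  qed
  moreover have "0 \<le> k * M"
    using \<open>0 \<le> k\<close> \<open>0 \<le> M\<close> by simp
  ultimately show ?thesis
    unfolding orbit_def by auto
qed

lemma orbit_radius_contraction:
  fixes act :: "'b::semigroup_mult \<Rightarrow> 'a::metric_space \<Rightarrow> 'a"
  assumes act: "is_action act" and P: "property_P TYPE('b) TYPE('a)"
    and tot: "sg_le_total TYPE('b)" and lip: "strong_orbit_lipschitz act k" "0 \<le> k"
    and N: "Ntilde TYPE('a) < N" "0 < N" and D: "orbit act x \<subseteq> cball x D"
  shows "\<exists>y. orbit act y \<subseteq> cball y (k * N * k * D) \<and> dist x y \<le> (1 + N * k) * D"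
proof -
  define M where "M = N * k * D"
  have "x \<in> cball x D"
    using D self_in_orbit[of x act] by blast
  then have "0 \<le> M"
    unfolding M_def using N lip by simp
  have "\<forall>t. \<exists>z\<in>cov (orbit act (act t x)). cov (orbit act (act t x)) \<subseteq> cball z M"
    unfolding M_def mult.assoc
  proof (intro allI exists_centre_of_cov[OF _ _ _ N])
    fix t
    show "orbit act (act t x) \<noteq> {}"
      using self_in_orbit[of "act t x" act] by blast
    have "orbit act (act t x) \<subseteq> cball x D"
      using orbit_act_subset[OF act] D by (rule order_trans)
    then show "bounded (orbit act (act t x))"
      by (rule bounded_subset[OF bounded_cball])
    show "\<forall>a\<in>orbit act (act t x). \<forall>b\<in>orbit act (act t x). dist a b \<le> k * D"
      unfolding image_tail_sg_le_eq_orbit[OF act, symmetric]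
      by (simp add: dist_act_le_if_orbit_in_cball[OF act tot lip D])
  qed
  then obtain z where z_cov: "\<And>t. z t \<in> cov (orbit act (act t x))"
    and z_centre: "\<And>t. cov (orbit act (act t x)) \<subseteq> cball (z t) M"
    by (metis bchoice UNIV_I)
  obtain w where w_cov: "\<And>s. w \<in> cov (orbit act (act s x))"
    and near: "\<And>e. 0 < e \<Longrightarrow> \<exists>u. orbit act (act u x) \<subseteq> cball w (M + e)"
    using property_P_orbit_centre[OF act P tot D z_cov z_centre \<open>0 \<le> M\<close>] by blast
  have "dist x w \<le> D + M"
  proof (rule field_le_epsilon)
    fix e :: real
    assume "0 < e"
    then obtain u where "orbit act (act u x) \<subseteq> cball w (M + e)"
      using near by blast
    then have "dist w (act u x) \<le> M + e"
      by (meson mem_cball self_in_orbit subsetD)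
    moreover have "dist x (act u x) \<le> D"
      by (meson D act_in_orbit mem_cball subsetD)
    ultimately show "dist x w \<le> D + M + e"
      using dist_triangle2[of x w "act u x"] by linarith
  qed
  moreover have "orbit act w \<subseteq> cball w (k * M)"
    using orbit_in_cball_if_asymptotic_centre[OF act lip w_cov near \<open>0 \<le> M\<close>] .
  ultimately show ?thesis
    unfolding M_def by (intro exI[of _ w]) (simp add: algebra_simps)
qed

lemma fixed_point_if_orbit_radii_tendsto_0:
  assumes lip: "strong_orbit_lipschitz act k" "0 \<le> k"
    and "x \<longlonglongrightarrow> z" and "r \<longlonglongrightarrow> 0"
    and radius: "\<And>n. orbit act (x n) \<subseteq> cball (x n) (r n)"
  shows "act s z = z"
proof -
  have bound: "dist (act s z) z \<le> k * (dist z (x n) + r n) + r n + dist (x n) z" for n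
  proof -
    have "orbit act (x n) \<subseteq> cball z (dist z (x n) + r n)"
    proof
      fix p
      assume "p \<in> orbit act (x n)"
      then have "dist (x n) p \<le> r n"
        using radius[of n] by (meson mem_cball subsetD)
      then show "p \<in> cball z (dist z (x n) + r n)"
        using dist_triangle[of z p "x n"] by simp
    qed
    then have "orbit act (act s (x n)) \<subseteq> cball (act s z) (k * (dist z (x n) + r n))"
      by (rule strong_orbit_lipschitz_cball[OF lip])
    then have "dist (act s z) (act s (x n)) \<le> k * (dist z (x n) + r n)"
      by (meson mem_cball self_in_orbit subsetD)
    moreover have "act s (x n) \<in> cball (x n) (r n)"
      using radius[of n] by (meson act_in_orbit subsetD)
    then have "dist (act s (x n)) (x n) \<le> r n"
      by (simp add: dist_commute)
    ultimately show ?thesis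
      using dist_triangle[of "act s z" z "act s (x n)"] dist_triangle[of "act s (x n)" z "x n"]
      by linarith
  qed
  have "(\<lambda>n. dist (x n) z) \<longlonglongrightarrow> 0"
    using \<open>x \<longlonglongrightarrow> z\<close> by (rule tendsto_dist_iff[THEN iffD1])
  moreover have "(\<lambda>n. dist z (x n)) \<longlonglongrightarrow> 0"
    using calculation by (simp add: dist_commute)
  ultimately have
    "(\<lambda>n. k * (dist z (x n) + r n) + r n + dist (x n) z) \<longlonglongrightarrow> k * (0 + 0) + 0 + 0"
    using \<open>r \<longlonglongrightarrow> 0\<close> by (intro tendsto_add tendsto_mult_left)
  then have "(\<lambda>n. k * (dist z (x n) + r n) + r n + dist (x n) z) \<longlonglongrightarrow> 0"
    by simp
  then have "dist (act s z) z \<le> 0"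
    by (rule LIMSEQ_le_const) (use bound in blast)
  then show ?thesis
    by simp
qed

lemma exists_gt_contraction_factor:
  fixes N k :: real
  assumes "0 \<le> k" and "N \<le> 0 \<or> k < N powr (-1/2)"
  obtains N' where "N < N'" and "0 < N'" and "k * N' * k < 1"
proof -
  define N\<^sub>0 where "N\<^sub>0 = max N 0"
  have "k\<^sup>2 * N\<^sub>0 < 1"
  proof (cases "N \<le> 0")
    case False
    then have "k * sqrt N < 1"
      using assms by (simp add: powr_minus_divide powr_half_sqrt field_simps)
    then have "(k * sqrt N)\<^sup>2 < 1"
      using \<open>0 \<le> k\<close> False by (simp add: power_less_one_iff abs_square_less_1)
    then show ?thesis
      using False by (simp add: N\<^sub>0_def power_mult_distrib)
  qed (simp add: N\<^sub>0_def)
  define N' where "N' = N\<^sub>0 + (1 - k\<^sup>2 * N\<^sub>0) / (k\<^sup>2 + 1)"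
  have "0 < k\<^sup>2 + 1"
    using zero_le_power2[of k] by linarith
  then have "0 < (1 - k\<^sup>2 * N\<^sub>0) / (k\<^sup>2 + 1)"
    using \<open>k\<^sup>2 * N\<^sub>0 < 1\<close> by simp
  then have "N < N'" "0 < N'"
    unfolding N'_def N\<^sub>0_def by auto
  moreover have "k\<^sup>2 * N' < 1"
  proof -
    have "k\<^sup>2 * ((1 - k\<^sup>2 * N\<^sub>0) / (k\<^sup>2 + 1)) < 1 - k\<^sup>2 * N\<^sub>0"
      using \<open>k\<^sup>2 * N\<^sub>0 < 1\<close> \<open>0 < k\<^sup>2 + 1\<close> by (simp add: field_simps)
    then show ?thesis
      unfolding N'_def by (simp add: distrib_left)
  qed
  then have "k * N' * k < 1"
    by (simp add: power2_eq_square mult.commute mult.left_commute)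
  ultimately show thesis
    by (rule that)
qed

theorem theorem5p4:
  fixes act :: "'b::semigroup_mult \<Rightarrow> 'a::complete_space \<Rightarrow> 'a"
    and k :: real
  assumes "is_action act"
    and "uniform_normal_structure TYPE('a)"
    and "property_P TYPE('b) TYPE('a)"
    and "sg_le_total TYPE('b)"
    and "strong_orbit_lipschitz act k"
    and "Ntilde TYPE('a) = 0 \<or> k < Ntilde TYPE('a) powr (-1/2)"
    and "\<exists>x. bounded (orbit act x)"
  shows "\<exists>z. \<forall>s. act s z = z"
proof -
  define k' where "k' = max k 0"
  have lip: "strong_orbit_lipschitz act k'" "0 \<le> k'"
    using strong_orbit_lipschitz_mono[OF assms(5)] unfolding k'_def by auto
  have "Ntilde TYPE('a) \<le> 0 \<or> k' < Ntilde TYPE('a) powr (-1/2)"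
    using assms(6) unfolding k'_def by auto
  then obtain N where N: "Ntilde TYPE('a) < N" "0 < N" and "k' * N * k' < 1"
    using \<open>0 \<le> k'\<close> exists_gt_contraction_factor by blast
  then have "0 \<le> k' * N * k'"
    using \<open>0 \<le> k'\<close> by simp
  obtain x\<^sub>0 D\<^sub>0 where "orbit act x\<^sub>0 \<subseteq> cball x\<^sub>0 D\<^sub>0"
    using assms(7) bounded_any_center by (metis mem_cball subsetI)
  then obtain x z where "x \<longlonglongrightarrow> z"
    and radius: "\<And>n. orbit act (x n) \<subseteq> cball (x n) ((k' * N * k') ^ n * D\<^sub>0)"
    using geometric_refinement_converges[where R = "\<lambda>y D. orbit act y \<subseteq> cball y D"]
      orbit_radius_contraction[OF assms(1,3,4) lip N] \<open>0 \<le> k' * N * k'\<close> \<open>k' * N * k' < 1\<close>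
    by blast
  moreover have "(\<lambda>n. (k' * N * k') ^ n * D\<^sub>0) \<longlonglongrightarrow> 0"
    using \<open>0 \<le> k' * N * k'\<close> \<open>k' * N * k' < 1\<close>
    by (intro tendsto_mult_left_zero LIMSEQ_power_zero) simp
  ultimately show ?thesis
    using fixed_point_if_orbit_radii_tendsto_0[OF lip] radius by blast
qed

end
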